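(* Let $\mathcal{G}_1$ be a two-terminal series-parallel graph with source $s_1$ and sink $t_1$, and $\mathcal{G}_2$ one with source $s_2$ and sink $t_2$. For a TTSP graph $\mathcal{G}$ with source $s$ and sink $t$, define $$\big(\mathcal{H}_2^{\mathcal{G}}\big)^2=-\tfrac12\mathrm{Tr}\big[e_t^T A^{-1}e_t\big],$$ where $A=-L_D$ and $L_D$ is the Dirichlet Laplacian of $\mathcal{G}$ grounded at $s$. Then $$\big(\mathcal{H}_2^{\mathcal{G}_1\odot\mathcal{G}_2}\big)^2=\big(\mathcal{H}_2^{\mathcal{G}_1}\big)^2+\big(\mathcal{H}_2^{\mathcal{G}_2}\big)^2,\qquad \big(\mathcal{H}_2^{\mathcal{G}_1\oslash\mathcal{G}_2}\big)^2=\big(\mathcal{H}_2^{\mathcal{G}_1}\big)^2:\big(\mathcal{H}_2^{\mathcal{G}_2}\big)^2.$$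
   Context: Graphs are undirected with positive edge weights (conductances); multiple edges are allowed. Two-terminal series-parallel (TTSP) graphs are defined recursively. A single edge with designated source and sink (a 1-path) is TTSP. If $\mathcal{G}_1,\mathcal{G}_2$ are TTSP with sources $s_1,s_2$ and sinks $t_1,t_2$, then: - the series join $\mathcal{G}_1\odot\mathcal{G}_2$ identifies $t_1$ with $s_2$ and has source $s_1$, sink $t_2$; it is TTSP; - the parallel join $\mathcal{G}_1\oslash\mathcal{G}_2$ identifies $s_1$ with $s_2$ (the source) and $t_1$ with $t_2$ (the sink); it is TTSP. The Dirichlet Laplacian grounded at $s$ is the weighted graph Laplacian with the row and column of $s$ deleted. Thus $\big(\mathcal{H}_2^{\mathcal{G}}\big)^2$ is the squared $\mathcal{H}_2$ norm of the single-leader consensus system $\dot x=Ax+e_tu$, $y=x$, with the source as grounded leader and the sink as input node. For $a,b>0$, the parallel sum is $a:b=\frac{ab}{a+b}=(a^{-1}+b^{-1})^{-1}$. *)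

theory Defs
  imports "Jordan_Normal_Form.Gauss_Jordan_Elimination"
begin

text \<open>Weighted multigraphs: a finite vertex set of naturals and a list of weighted
  undirected edges (u, v, w) with conductance w (parallel edges allowed).\<close>

type_synonym wedge = "nat \<times> nat \<times> real"

text \<open>Joins are realised on concrete vertex labels: the two
  graphs share exactly the identified terminals.\<close>

inductive ttsp :: "nat set \<Rightarrow> wedge list \<Rightarrow> nat \<Rightarrow> nat \<Rightarrow> bool" where
  edge: "s \<noteq> t \<Longrightarrow> w > 0 \<Longrightarrow> ttsp {s, t} [(s, t, w)] s t"
| series: "ttsp V1 E1 s1 t1 \<Longrightarrow> ttsp V2 E2 t1 t2 \<Longrightarrow> V1 \<inter> V2 = {t1}
      \<Longrightarrow> ttsp (V1 \<union> V2) (E1 @ E2) s1 t2"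
| parallel: "ttsp V1 E1 s t \<Longrightarrow> ttsp V2 E2 s t \<Longrightarrow> V1 \<inter> V2 = {s, t}
      \<Longrightarrow> ttsp (V1 \<union> V2) (E1 @ E2) s t"

definition laplacian :: "wedge list \<Rightarrow> nat \<Rightarrow> nat \<Rightarrow> real" where
  "laplacian E u v =
     (if u = v then (\<Sum>(a, b, w)\<leftarrow>E. if (a = u \<or> b = u) \<and> a \<noteq> b then w else 0)
      else - (\<Sum>(a, b, w)\<leftarrow>E. if (a = u \<and> b = v) \<or> (a = v \<and> b = u) then w else 0))"

definition grounded_verts :: "nat set \<Rightarrow> nat \<Rightarrow> nat list" where
  "grounded_verts V s = sorted_list_of_set (V - {s})"

definition dirichlet_laplacian :: "nat set \<Rightarrow> wedge list \<Rightarrow> nat \<Rightarrow> real mat" where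
  "dirichlet_laplacian V E s =
     (let xs = grounded_verts V s
      in mat (length xs) (length xs) (\<lambda>(i, j). laplacian E (xs ! i) (xs ! j)))"

text \<open>(H_2^G)^2 = -1/2 Tr[e_t^T A^{-1} e_t] with A = - L_D (the trace of a 1x1 matrix
  is its entry). The index of t in the sorted list of non-source vertices is the
  number of non-source vertices below t.\<close>

definition H2sq :: "nat set \<Rightarrow> wedge list \<Rightarrow> nat \<Rightarrow> nat \<Rightarrow> real" where
  "H2sq V E s t =
     (let xs = grounded_verts V s;
          A = - dirichlet_laplacian V E s;
          e = unit_vec (length xs) (card {v \<in> V - {s}. v < t})
      in - (1/2) * (e \<bullet> (the (mat_inverse A) *\<^sub>v e)))"

definition par_sum :: "real \<Rightarrow> real \<Rightarrow> real" where
  "par_sum a b = a * b / (a + b)"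

end

theory Submission
  imports Defs "Jordan_Normal_Form.Determinant"
begin

(* Let \<phi> be the potential, grounded at the source s, of a unit current entering the network at
   the sink t and leaving it at s.  Then - A \<phi> = e_t on the non-source vertices, so
   e_t\<^sup>T A\<^sup>-\<^sup>1 e_t = - \<phi> t = - R with R the effective resistance between s and t, and
   (H_2^G)\<^sup>2 = R / 2.  Effective resistances add in series and combine by the parallel sum in
   parallel; both laws are witnessed by gluing the two potentials, shifted by R\<^sub>1 in the series
   case and scaled by R\<^sub>2 / (R\<^sub>1 + R\<^sub>2) and R\<^sub>1 / (R\<^sub>1 + R\<^sub>2) in the parallel case.  A is invertible
   because the grounded Laplacian of a connected network with positive conductances is
   nonsingular: a potential in its kernel has zero energy, hence is constant, hence zero. *)

definition incidence :: "nat \<Rightarrow> nat \<Rightarrow> nat \<Rightarrow> real" where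
  "incidence a b u = of_bool (u = a) - of_bool (u = b)"

definition net_current :: "wedge list \<Rightarrow> (nat \<Rightarrow> real) \<Rightarrow> nat \<Rightarrow> real" where
  "net_current E f u = (\<Sum>(a, b, w)\<leftarrow>E. w * incidence a b u * (f a - f b))"

definition energy :: "wedge list \<Rightarrow> (nat \<Rightarrow> real) \<Rightarrow> real" where
  "energy E f = (\<Sum>(a, b, w)\<leftarrow>E. w * (f a - f b)\<^sup>2)"

definition edges_in :: "nat set \<Rightarrow> wedge list \<Rightarrow> bool" where
  "edges_in V E \<longleftrightarrow> (\<forall>(a, b, w) \<in> set E. a \<in> V \<and> b \<in> V)"

lemma edges_in_Nil [simp]: "edges_in V []"
  by (simp add: edges_in_def)

lemma edges_in_Cons [simp]: "edges_in V ((a, b, w) # E) \<longleftrightarrow> a \<in> V \<and> b \<in> V \<and> edges_in V E"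
  by (simp add: edges_in_def)

lemma edges_in_append [simp]: "edges_in V (E1 @ E2) \<longleftrightarrow> edges_in V E1 \<and> edges_in V E2"
  by (simp add: edges_in_def ball_Un)

lemma edges_in_mono: "edges_in V E \<Longrightarrow> V \<subseteq> W \<Longrightarrow> edges_in W E"
  by (auto simp: edges_in_def)

lemma laplacian_Nil [simp]: "laplacian [] u v = 0"
  by (simp add: laplacian_def)

lemma laplacian_Cons:
  "laplacian ((a, b, w) # E) u v = w * incidence a b u * incidence a b v + laplacian E u v"
  by (auto simp: laplacian_def incidence_def)

lemma sum_incidence_mult:
  assumes "finite V" "a \<in> V" "b \<in> V"
  shows "(\<Sum>v\<in>V. incidence a b v * f v) = f a - f b"
  using assms by (simp add: incidence_def left_diff_distrib sum_subtractf)

lemma net_current_Nil [simp]: "net_current [] f u = 0"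
  by (simp add: net_current_def)

lemma net_current_Cons [simp]:
  "net_current ((a, b, w) # E) f u = w * incidence a b u * (f a - f b) + net_current E f u"
  by (simp add: net_current_def)

lemma net_current_append [simp]:
  "net_current (E1 @ E2) f u = net_current E1 f u + net_current E2 f u"
  by (simp add: net_current_def)

lemma laplacian_mult_sum:
  assumes "finite V" "edges_in V E"
  shows "(\<Sum>v\<in>V. laplacian E u v * f v) = net_current E f u"
  using assms(2)
proof (induction E)
  case (Cons e E)
  obtain a b w where e: "e = (a, b, w)" by (cases e)
  have "(\<Sum>v\<in>V. laplacian (e # E) u v * f v)
      = w * incidence a b u * (\<Sum>v\<in>V. incidence a b v * f v) + (\<Sum>v\<in>V. laplacian E u v * f v)"
    by (simp add: e laplacian_Cons sum.distrib distrib_right sum_distrib_left mult.assoc)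
  with Cons show ?case
    using sum_incidence_mult[OF assms(1)] by (simp add: e)
qed simp

lemma net_current_energy:
  assumes "finite V" "edges_in V E"
  shows "(\<Sum>u\<in>V. f u * net_current E f u) = energy E f"
  using assms(2)
proof (induction E)
  case (Cons e E)
  obtain a b w where e: "e = (a, b, w)" by (cases e)
  have "f u * net_current (e # E) f u
      = w * (f a - f b) * (incidence a b u * f u) + f u * net_current E f u" for u
    by (simp add: e algebra_simps)
  then have "(\<Sum>u\<in>V. f u * net_current (e # E) f u)
      = w * (f a - f b) * (\<Sum>u\<in>V. incidence a b u * f u) + (\<Sum>u\<in>V. f u * net_current E f u)"
    by (simp add: sum.distrib sum_distrib_left)
  with Cons show ?case
    using sum_incidence_mult[OF assms(1)] by (simp add: e energy_def power2_eq_square)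
qed (simp add: energy_def)

lemma energy_eq_0_imp_constant_on_edges:
  assumes "\<forall>(a, b, w) \<in> set E. 0 < w" "energy E f = 0"
  shows "\<forall>(a, b, w) \<in> set E. f a = f b"
proof -
  have "\<forall>x \<in> set (map (\<lambda>(a, b, w). w * (f a - f b)\<^sup>2) E). x = 0"
    using assms by (subst sum_list_nonneg_eq_0_iff[symmetric]) (auto simp: energy_def)
  then have "w * (f a - f b)\<^sup>2 = 0" "0 < w" if "(a, b, w) \<in> set E" for a b w
    using that assms(1) by force+
  then have "f a = f b" if "(a, b, w) \<in> set E" for a b w
    using that by (metis less_irrefl mult_eq_0_iff power_eq_0_iff right_minus_eq)
  then show ?thesis
    by auto
qed

lemma net_current_cong:
  assumes "edges_in V E" "\<And>v. v \<in> V \<Longrightarrow> f v = g v"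
  shows "net_current E f u = net_current E g u"
  using assms by (induction E) auto

lemma net_current_add_const: "net_current E (\<lambda>v. c + f v) u = net_current E f u"
  by (induction E) auto

lemma net_current_uminus: "net_current E (\<lambda>v. - f v) u = - net_current E f u"
  by (induction E) (auto simp: algebra_simps)

lemma net_current_mult_const: "net_current E (\<lambda>v. c * f v) u = c * net_current E f u"
  by (induction E) (auto simp: algebra_simps)

lemma net_current_glue:
  assumes "edges_in V1 E1" "edges_in V2 E2" "\<And>v. v \<in> V1 \<inter> V2 \<Longrightarrow> f1 v = f2 v"
  shows "net_current (E1 @ E2) (\<lambda>v. if v \<in> V1 then f1 v else f2 v) u
       = net_current E1 f1 u + net_current E2 f2 u"
proof -
  have "net_current E1 (\<lambda>v. if v \<in> V1 then f1 v else f2 v) u = net_current E1 f1 u"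
    by (rule net_current_cong[OF assms(1)]) simp
  moreover have "net_current E2 (\<lambda>v. if v \<in> V1 then f1 v else f2 v) u = net_current E2 f2 u"
    by (rule net_current_cong[OF assms(2)]) (use assms(3) in auto)
  ultimately show ?thesis
    by simp
qed

subsection \<open>Unit current potentials\<close>

text \<open>R is the effective resistance between s and t.\<close>

definition unit_current_potential :: "wedge list \<Rightarrow> nat \<Rightarrow> nat \<Rightarrow> (nat \<Rightarrow> real) \<Rightarrow> real \<Rightarrow> bool"
  where "unit_current_potential E s t \<phi> R \<longleftrightarrow>
    0 < R \<and> \<phi> s = 0 \<and> \<phi> t = R \<and> (\<forall>u. net_current E \<phi> u = incidence t s u)"

lemma unit_current_potential_edge:
  assumes "s \<noteq> t" "0 < w"
  shows "unit_current_potential [(s, t, w)] s t (\<lambda>v. if v = t then 1 / w else 0) (1 / w)"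
  using assms by (simp add: unit_current_potential_def incidence_def)

lemma unit_current_potential_series:
  assumes "edges_in V1 E1" "edges_in V2 E2" "V1 \<inter> V2 \<subseteq> {t1}" "s1 \<in> V1" "t2 \<notin> V1"
    and P1: "unit_current_potential E1 s1 t1 \<phi>1 R1"
    and P2: "unit_current_potential E2 t1 t2 \<phi>2 R2"
  shows "unit_current_potential (E1 @ E2) s1 t2
           (\<lambda>v. if v \<in> V1 then \<phi>1 v else R1 + \<phi>2 v) (R1 + R2)"
proof -
  have "\<phi>1 v = R1 + \<phi>2 v" if "v \<in> V1 \<inter> V2" for v
    using that assms(3) P1 P2 by (auto simp: unit_current_potential_def)
  then have "net_current (E1 @ E2) (\<lambda>v. if v \<in> V1 then \<phi>1 v else R1 + \<phi>2 v) u
      = net_current E1 \<phi>1 u + net_current E2 \<phi>2 u" for u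
    using net_current_glue[OF assms(1,2)] by (simp add: net_current_add_const)
  then show ?thesis
    using assms P1 P2 by (simp add: unit_current_potential_def incidence_def)
qed

lemma unit_current_potential_parallel:
  assumes "edges_in V1 E1" "edges_in V2 E2" "V1 \<inter> V2 \<subseteq> {s, t}"
    and P1: "unit_current_potential E1 s t \<phi>1 R1"
    and P2: "unit_current_potential E2 s t \<phi>2 R2"
  shows "unit_current_potential (E1 @ E2) s t
           (\<lambda>v. if v \<in> V1 then R2 / (R1 + R2) * \<phi>1 v else R1 / (R1 + R2) * \<phi>2 v)
           (par_sum R1 R2)"
proof -
  define \<alpha> \<beta> where "\<alpha> = R2 / (R1 + R2)" and "\<beta> = R1 / (R1 + R2)"
  have R: "0 < R1" "0 < R2" using P1 P2 by (simp_all add: unit_current_potential_def)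
  then have "\<alpha> + \<beta> = 1"
    by (simp add: \<alpha>_def \<beta>_def add_divide_distrib[symmetric])
  have R_eq: "\<alpha> * R1 = par_sum R1 R2" "\<beta> * R2 = par_sum R1 R2"
    by (simp_all add: \<alpha>_def \<beta>_def par_sum_def)
  have "\<alpha> * \<phi>1 v = \<beta> * \<phi>2 v" if "v \<in> V1 \<inter> V2" for v
    using that assms(3) P1 P2 R_eq by (auto simp: unit_current_potential_def)
  then have "net_current (E1 @ E2) (\<lambda>v. if v \<in> V1 then \<alpha> * \<phi>1 v else \<beta> * \<phi>2 v) u
      = \<alpha> * net_current E1 \<phi>1 u + \<beta> * net_current E2 \<phi>2 u" for u
    using net_current_glue[OF assms(1,2)] by (simp add: net_current_mult_const)
  with \<open>\<alpha> + \<beta> = 1\<close> R_eq show ?thesis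
    using R P1 P2 unfolding \<alpha>_def[symmetric] \<beta>_def[symmetric]
    by (simp add: unit_current_potential_def par_sum_def distrib_right[symmetric])
qed

lemma ttsp_wellformed:
  assumes "ttsp V E s t"
  shows "finite V \<and> s \<in> V \<and> t \<in> V \<and> s \<noteq> t \<and> edges_in V E \<and> (\<forall>(a, b, w) \<in> set E. 0 < w)"
  using assms
  by (induction rule: ttsp.induct) (auto intro: edges_in_mono)

lemma ttsp_connected:
  assumes "ttsp V E s t" "\<forall>(a, b, w) \<in> set E. f a = f b" "v \<in> V"
  shows "f v = f s"
  using assms
proof (induction arbitrary: v rule: ttsp.induct)
  case (series V1 E1 s1 t1 V2 E2 t2)
  have "t1 \<in> V1"
    using ttsp_wellformed[OF series.hyps(1)] by simp
  moreover have "\<forall>(a, b, w) \<in> set E1. f a = f b" "\<forall>(a, b, w) \<in> set E2. f a = f b"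
    using series.prems(1) by auto
  ultimately show ?case
    using series.IH series.prems(2) by (metis UnE)
next
  case (parallel V1 E1 s t V2 E2)
  have "\<forall>(a, b, w) \<in> set E1. f a = f b" "\<forall>(a, b, w) \<in> set E2. f a = f b"
    using parallel.prems(1) by auto
  then show ?case
    using parallel.IH parallel.prems(2) by (metis UnE)
qed auto

lemma ttsp_series_unit_current_potential:
  assumes G1: "ttsp V1 E1 s1 t1" and G2: "ttsp V2 E2 t1 t2" and I: "V1 \<inter> V2 = {t1}"
    and P1: "unit_current_potential E1 s1 t1 \<phi>1 R1"
    and P2: "unit_current_potential E2 t1 t2 \<phi>2 R2"
  shows "\<exists>\<phi>. unit_current_potential (E1 @ E2) s1 t2 \<phi> (R1 + R2)"
proof -
  have W1: "s1 \<in> V1" "edges_in V1 E1"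
    using ttsp_wellformed[OF G1] by simp_all
  have W2: "t2 \<in> V2" "t1 \<noteq> t2" "edges_in V2 E2"
    using ttsp_wellformed[OF G2] by simp_all
  then have "t2 \<notin> V1"
    using I by (metis IntI singletonD)
  then show ?thesis
    using unit_current_potential_series[OF W1(2) W2(3) equalityD1[OF I] W1(1) _ P1 P2] by blast
qed

lemma ttsp_parallel_unit_current_potential:
  assumes G1: "ttsp V1 E1 s t" and G2: "ttsp V2 E2 s t" and I: "V1 \<inter> V2 = {s, t}"
    and P1: "unit_current_potential E1 s t \<phi>1 R1"
    and P2: "unit_current_potential E2 s t \<phi>2 R2"
  shows "\<exists>\<phi>. unit_current_potential (E1 @ E2) s t \<phi> (par_sum R1 R2)"
proof -
  have "edges_in V1 E1" "edges_in V2 E2"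
    using ttsp_wellformed[OF G1] ttsp_wellformed[OF G2] by simp_all
  then show ?thesis
    using unit_current_potential_parallel[OF _ _ equalityD1[OF I] P1 P2] by blast
qed

lemma ttsp_unit_current_potential:
  "ttsp V E s t \<Longrightarrow> \<exists>\<phi> R. unit_current_potential E s t \<phi> R"
proof (induction rule: ttsp.induct)
  case (edge s t w)
  then show ?case using unit_current_potential_edge by blast
next
  case (series V1 E1 s1 t1 V2 E2 t2)
  then show ?case using ttsp_series_unit_current_potential by blast
next
  case (parallel V1 E1 s t V2 E2)
  then show ?case using ttsp_parallel_unit_current_potential by blast
qed

subsection \<open>The grounded Laplacian\<close>

lemma card_less_nth_sorted_strict:
  fixes xs :: "'a::linorder list"
  assumes "sorted_wrt (<) xs" "k < length xs"
  shows "card {v \<in> set xs. v < xs ! k} = k"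
proof -
  have less_iff: "xs ! i < xs ! k \<longleftrightarrow> i < k" if "i < length xs" for i
    using that assms sorted_wrt_nth_less[OF assms(1)]
    by (metis less_asym linorder_neqE_nat)
  have "{v \<in> set xs. v < xs ! k} = (!) xs ` {0..<k}"
  proof (intro equalityI subsetI)
    fix v assume "v \<in> {v \<in> set xs. v < xs ! k}"
    then obtain i where "i < length xs" "v = xs ! i" "xs ! i < xs ! k"
      by (auto simp: in_set_conv_nth)
    then show "v \<in> (!) xs ` {0..<k}"
      using less_iff by auto
  next
    fix v assume "v \<in> (!) xs ` {0..<k}"
    then show "v \<in> {v \<in> set xs. v < xs ! k}"
      using assms(2) less_iff by auto
  qed
  also have "\<dots> = set (take k xs)"
    using assms(2) by (simp add: nth_image)
  finally show ?thesis
    using assms by (simp add: distinct_card strict_sorted_iff)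
qed

lemma grounded_verts_sink:
  assumes "finite V" "t \<in> V" "t \<noteq> s"
  defines "k \<equiv> card {v \<in> V - {s}. v < t}"
  shows "k < length (grounded_verts V s)" "grounded_verts V s ! k = t"
proof -
  let ?xs = "grounded_verts V s"
  have set: "set ?xs = V - {s}" and sorted: "sorted_wrt (<) ?xs"
    using assms by (simp_all add: grounded_verts_def strict_sorted_list_of_set)
  obtain j where j: "j < length ?xs" "?xs ! j = t"
    using assms set by (metis DiffI in_set_conv_nth singletonD)
  have "k = j"
    using card_less_nth_sorted_strict[OF sorted j(1)] by (simp add: k_def j(2) set)
  with j show "k < length ?xs" "?xs ! k = t" by simp_all
qed

lemma dirichlet_laplacian_carrier:
  "dirichlet_laplacian V E s \<in> carrier_mat (length (grounded_verts V s)) (length (grounded_verts V s))"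
  by (simp add: dirichlet_laplacian_def Let_def)

lemma dirichlet_laplacian_mult_vec:
  assumes "finite V" "edges_in V E" "f s = 0" "i < length (grounded_verts V s)"
  defines "xs \<equiv> grounded_verts V s"
  shows "(dirichlet_laplacian V E s *\<^sub>v vec (length xs) (\<lambda>j. f (xs ! j))) $ i = net_current E f (xs ! i)"
proof -
  have set: "set xs = V - {s}" and distinct: "distinct xs"
    using assms(1) by (simp_all add: xs_def grounded_verts_def)
  have "(dirichlet_laplacian V E s *\<^sub>v vec (length xs) (\<lambda>j. f (xs ! j))) $ i
      = (\<Sum>j<length xs. laplacian E (xs ! i) (xs ! j) * f (xs ! j))"
    using assms(4) by (auto simp: xs_def dirichlet_laplacian_def Let_def scalar_prod_def lessThan_atLeast0
        intro!: sum.cong)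
  also have "\<dots> = (\<Sum>v\<in>V - {s}. laplacian E (xs ! i) v * f v)"
    using sum_list_sum_nth[of "map (\<lambda>v. laplacian E (xs ! i) v * f v) xs"]
      sum_list_distinct_conv_sum_set[OF distinct, of "\<lambda>v. laplacian E (xs ! i) v * f v"]
    by (simp add: set atLeast0LessThan)
  also have "\<dots> = (\<Sum>v\<in>V. laplacian E (xs ! i) v * f v)"
    using assms(1,3) by (simp add: sum_diff1)
  also have "\<dots> = net_current E f (xs ! i)"
    by (rule laplacian_mult_sum[OF assms(1,2)])
  finally show ?thesis .
qed

locale grounded_network =
  fixes V :: "nat set" and E :: "wedge list" and s :: nat
  assumes finite_V: "finite V"
    and edges_V: "edges_in V E"
    and positive: "\<forall>(a, b, w) \<in> set E. 0 < w"
    and connected: "\<And>(f :: nat \<Rightarrow> real) v. \<forall>(a, b, w) \<in> set E. f a = f b \<Longrightarrow> v \<in> V \<Longrightarrow> f v = f s"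
begin

abbreviation "xs \<equiv> grounded_verts V s"
abbreviation "n \<equiv> length xs"
abbreviation "L \<equiv> dirichlet_laplacian V E s"

lemma set_xs: "set xs = V - {s}"
  using finite_V by (simp add: grounded_verts_def)

lemma distinct_xs: "distinct xs"
  by (simp add: grounded_verts_def)

lemma dirichlet_laplacian_kernel:
  assumes v: "v \<in> carrier_vec n" and Lv: "L *\<^sub>v v = 0\<^sub>v n"
  shows "v = 0\<^sub>v n"
proof -
  have inj: "inj_on ((!) xs) {..<n}"
    using inj_on_nth[OF distinct_xs] by simp
  define f where "f u = (if u \<in> set xs then v $ the_inv_into {..<n} ((!) xs) u else 0)" for u
  have f_nth: "f (xs ! j) = v $ j" if "j < n" for j
    using that the_inv_into_f_f[OF inj] by (simp add: f_def)
  have v_eq: "vec n (\<lambda>j. f (xs ! j)) = v"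
    using v by (intro eq_vecI) (simp_all add: f_nth)
  have f_s: "f s = 0"
    by (simp add: f_def set_xs)
  have net_0: "net_current E f (xs ! i) = 0" if "i < n" for i
    using dirichlet_laplacian_mult_vec[where f = f and s = s, OF finite_V edges_V f_s that] Lv that
    by (simp only: v_eq index_zero_vec)
  have "(\<Sum>u\<in>V. f u * net_current E f u) = 0"
  proof (rule sum.neutral, rule ballI)
    fix u assume "u \<in> V"
    show "f u * net_current E f u = 0"
    proof (cases "u = s")
      case False
      with \<open>u \<in> V\<close> obtain i where "i < n" "u = xs ! i"
        using set_xs by (metis DiffI in_set_conv_nth singletonD)
      then show ?thesis using net_0 by simp
    qed (simp add: f_s)
  qed
  then have "energy E f = 0"
    using net_current_energy[OF finite_V edges_V] by simp
  then have f_0: "f u = 0" if "u \<in> V" for u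
    using connected[OF energy_eq_0_imp_constant_on_edges[OF positive \<open>energy E f = 0\<close>] that] f_s
    by simp
  show ?thesis
  proof (rule eq_vecI)
    fix j assume "j < dim_vec (0\<^sub>v n :: real vec)"
    then have "j < n" by simp
    then show "v $ j = 0\<^sub>v n $ j"
      using f_0[of "xs ! j"] f_nth[of j] nth_mem[of j xs] set_xs by simp
  qed (use v in simp)
qed

lemma neg_dirichlet_laplacian_inverse:
  obtains B where "mat_inverse (- L) = Some B" "B * (- L) = 1\<^sub>m n" "B \<in> carrier_mat n n"
proof -
  have A: "- L \<in> carrier_mat n n"
    using dirichlet_laplacian_carrier by simp
  have "det (- L) \<noteq> 0"
  proof
    assume "det (- L) = 0"
    then obtain v where v: "v \<in> carrier_vec n" "v \<noteq> 0\<^sub>v n" "(- L) *\<^sub>v v = 0\<^sub>v n"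
      using det_0_iff_vec_prod_zero[OF A] by blast
    have "L *\<^sub>v v = - ((- L) *\<^sub>v v)"
      using v(1) dirichlet_laplacian_carrier[of V E s] by simp
    with v(3) have "L *\<^sub>v v = 0\<^sub>v n"
      by simp
    with v dirichlet_laplacian_kernel show False by blast
  qed
  then have "- L \<in> Units (ring_mat TYPE(real) n undefined)"
    by (rule det_non_zero_imp_unit[OF A])
  then obtain B where "mat_inverse (- L) = Some B"
    using mat_inverse(1)[OF A] by fastforce
  with that mat_inverse(2)[OF A] show ?thesis by blast
qed

lemma H2sq_unit_current_potential:
  assumes "t \<in> V" "t \<noteq> s" and P: "unit_current_potential E s t \<phi> R"
  shows "H2sq V E s t = R / 2"
proof -
  define k where "k = card {v \<in> V - {s}. v < t}"
  have k: "k < n" "xs ! k = t"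
    using grounded_verts_sink[OF finite_V assms(1,2)] by (simp_all add: k_def)
  obtain B where B: "mat_inverse (- L) = Some B" "B * (- L) = 1\<^sub>m n" "B \<in> carrier_mat n n"
    using neg_dirichlet_laplacian_inverse by blast
  have \<phi>_s: "- \<phi> s = 0"
    using P by (simp add: unit_current_potential_def)
  define y where "y = vec n (\<lambda>j. - \<phi> (xs ! j))"
  have y: "y \<in> carrier_vec n" by (simp add: y_def)
  have "(L *\<^sub>v y) $ i = - (unit_vec n k) $ i" if "i < n" for i
  proof -
    have "(L *\<^sub>v y) $ i = net_current E (\<lambda>v. - \<phi> v) (xs ! i)"
      unfolding y_def
      by (rule dirichlet_laplacian_mult_vec[where f = "\<lambda>v. - \<phi> v" and s = s,
            OF finite_V edges_V \<phi>_s that])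
    also have "\<dots> = - incidence t s (xs ! i)"
      using P by (simp add: net_current_uminus unit_current_potential_def)
    also have "\<dots> = - (unit_vec n k) $ i"
    proof -
      have "xs ! i \<noteq> s"
        using nth_mem[OF that] set_xs by auto
      moreover have "xs ! i = t \<longleftrightarrow> i = k"
        using nth_eq_iff_index_eq[OF distinct_xs that k(1)] k(2) by simp
      ultimately show ?thesis
        using that k(1) by (simp add: incidence_def)
    qed
    finally show ?thesis .
  qed
  then have "- (L *\<^sub>v y) = unit_vec n k"
    using dirichlet_laplacian_carrier[of V E s] by (intro eq_vecI) simp_all
  moreover have "(- L) *\<^sub>v y = - (L *\<^sub>v y)"
    using y dirichlet_laplacian_carrier[of V E s] by simp
  ultimately have "B *\<^sub>v unit_vec n k = (B * (- L)) *\<^sub>v y"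
    using assoc_mult_mat_vec[OF B(3) _ y, of "- L"] dirichlet_laplacian_carrier[of V E s] by simp
  also have "\<dots> = y"
    using B(2) y by simp
  finally have "B *\<^sub>v unit_vec n k = y" .
  then have "unit_vec n k \<bullet> (B *\<^sub>v unit_vec n k) = - \<phi> t"
    using y k by (simp add: y_def)
  moreover have "H2sq V E s t = - (1/2) * (unit_vec n k \<bullet> (B *\<^sub>v unit_vec n k))"
    unfolding H2sq_def Let_def k_def[symmetric] B(1) by simp
  ultimately show ?thesis
    using P by (simp add: unit_current_potential_def)
qed

end

lemma ttsp_grounded_network: "ttsp V E s t \<Longrightarrow> grounded_network V E s"
  using ttsp_wellformed ttsp_connected by unfold_locales blast+

lemma H2sq_ttsp:
  assumes "ttsp V E s t" "unit_current_potential E s t \<phi> R"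
  shows "H2sq V E s t = R / 2"
  using grounded_network.H2sq_unit_current_potential[OF ttsp_grounded_network[OF assms(1)]]
    ttsp_wellformed[OF assms(1)] assms(2) by blast

lemma H2sq_series:
  assumes G1: "ttsp V1 E1 s1 t1" and G2: "ttsp V2 E2 t1 t2" and I: "V1 \<inter> V2 = {t1}"
  shows "H2sq (V1 \<union> V2) (E1 @ E2) s1 t2 = H2sq V1 E1 s1 t1 + H2sq V2 E2 t1 t2"
proof -
  obtain \<phi>1 R1 where P1: "unit_current_potential E1 s1 t1 \<phi>1 R1"
    using ttsp_unit_current_potential[OF G1] by blast
  obtain \<phi>2 R2 where P2: "unit_current_potential E2 t1 t2 \<phi>2 R2"
    using ttsp_unit_current_potential[OF G2] by blast
  obtain \<phi> where "unit_current_potential (E1 @ E2) s1 t2 \<phi> (R1 + R2)"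
    using ttsp_series_unit_current_potential[OF G1 G2 I P1 P2] by blast
  then have "H2sq (V1 \<union> V2) (E1 @ E2) s1 t2 = (R1 + R2) / 2"
    by (rule H2sq_ttsp[OF ttsp.series[OF G1 G2 I]])
  then show ?thesis
    by (simp add: H2sq_ttsp[OF G1 P1] H2sq_ttsp[OF G2 P2])
qed

lemma par_sum_mult_left: "par_sum (c * a) (c * b) = c * par_sum a b"
  by (cases "c = 0") (simp_all add: par_sum_def distrib_left[symmetric])

lemma H2sq_parallel:
  assumes G1: "ttsp V1 E1 s t" and G2: "ttsp V2 E2 s t" and I: "V1 \<inter> V2 = {s, t}"
  shows "H2sq (V1 \<union> V2) (E1 @ E2) s t = par_sum (H2sq V1 E1 s t) (H2sq V2 E2 s t)"
proof -
  obtain \<phi>1 R1 where P1: "unit_current_potential E1 s t \<phi>1 R1"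
    using ttsp_unit_current_potential[OF G1] by blast
  obtain \<phi>2 R2 where P2: "unit_current_potential E2 s t \<phi>2 R2"
    using ttsp_unit_current_potential[OF G2] by blast
  obtain \<phi> where "unit_current_potential (E1 @ E2) s t \<phi> (par_sum R1 R2)"
    using ttsp_parallel_unit_current_potential[OF G1 G2 I P1 P2] by blast
  then have "H2sq (V1 \<union> V2) (E1 @ E2) s t = par_sum R1 R2 / 2"
    by (rule H2sq_ttsp[OF ttsp.parallel[OF G1 G2 I]])
  also have "\<dots> = par_sum (R1 / 2) (R2 / 2)"
    using par_sum_mult_left[of "1 / 2" R1 R2] by simp
  finally show ?thesis
    by (simp add: H2sq_ttsp[OF G1 P1] H2sq_ttsp[OF G2 P2])
qed

theorem theorem3:
  assumes G1: "ttsp V1 E1 s1 t1"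
      and G2: "ttsp V2 E2 s2 t2"
  shows "(s2 = t1 \<and> V1 \<inter> V2 = {t1} \<longrightarrow>
           H2sq (V1 \<union> V2) (E1 @ E2) s1 t2 = H2sq V1 E1 s1 t1 + H2sq V2 E2 s2 t2) \<and>
         (s2 = s1 \<and> t2 = t1 \<and> V1 \<inter> V2 = {s1, t1} \<longrightarrow>
           H2sq (V1 \<union> V2) (E1 @ E2) s1 t1 = par_sum (H2sq V1 E1 s1 t1) (H2sq V2 E2 s2 t2))"
proof (intro conjI impI)
  assume "s2 = t1 \<and> V1 \<inter> V2 = {t1}"
  then show "H2sq (V1 \<union> V2) (E1 @ E2) s1 t2 = H2sq V1 E1 s1 t1 + H2sq V2 E2 s2 t2"
    using H2sq_series[OF G1] G2 by simp
next
  assume "s2 = s1 \<and> t2 = t1 \<and> V1 \<inter> V2 = {s1, t1}"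
  then show "H2sq (V1 \<union> V2) (E1 @ E2) s1 t1 = par_sum (H2sq V1 E1 s1 t1) (H2sq V2 E2 s2 t2)"
    using H2sq_parallel[OF G1] G2 by simp
qed

end
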